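(* Let $(d_n)_{n\ge1}$ be a sequence of prime numbers. Then \[ \lambda(\{\mathsf a'_n=d_n\text{ for infinitely many }n\})=\begin{cases}1&\text{if }\sum_{n\ge1}\frac{1}{d_n^2}=\infty,\\ 0&\text{otherwise.}\end{cases} \]
   Context: $I=(0,1]$, $\lambda$ is Lebesgue measure on $I$, and $\mathsf a_n(x)$ denotes the $n$-th continued fraction digit of $x\in I$. $\mathbb P$ is the set of primes. The prime digits are $\mathsf a'_n(x):=\mathsf a_n(x)$ if $\mathsf a_n(x)\in\mathbb P$ and $\mathsf a'_n(x):=0$ otherwise. *)

theory Defs
  imports "HOL-Analysis.Analysis" "HOL-Computational_Algebra.Primes"
begin

text \<open>Gauss map on (0,1]: T x = 1/x - floor(1/x) (with 1/0 = 0 in HOL, T 0 = 0).\<close>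
definition gauss_map :: "real \<Rightarrow> real" where
  "gauss_map x = frac (1 / x)"

definition cf_digit :: "nat \<Rightarrow> real \<Rightarrow> nat" where
  "cf_digit n x = nat \<lfloor>1 / (gauss_map ^^ (n - 1)) x\<rfloor>"

definition prime_digit :: "nat \<Rightarrow> real \<Rightarrow> nat" where
  "prime_digit n x = (if prime (cf_digit n x) then cf_digit n x else 0)"

end

theory Submission
  imports Defs
begin

text \<open>The cylinder of the digit string \<open>js\<close> is the image of \<open>(0,1)\<close> under a Moebius inverse
  branch of \<open>gauss_map ^^ length js\<close> whose derivative varies by at most a factor \<open>4\<close>. Hence an
  event fixed by the first \<open>n\<close> digits and an event in the later digits are independent up to a
  factor \<open>4\<close>, and the first digit equals \<open>d\<close> with probability \<open>1/(d(d+1))\<close>. If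
  \<open>\<Sum> 1/d\<^sub>n\<^sup>2 < \<infinity>\<close>, Borel-Cantelli applies; otherwise the measure of the set avoiding \<open>d\<^sub>k\<close> for
  all \<open>m \<le> k < N\<close> is at most \<open>exp (- \<Sum>\<^sub>k 1/(8 d\<^sub>k\<^sup>2))\<close>, which tends to \<open>0\<close>. Since every \<open>d\<^sub>n\<close> is
  prime, \<open>a'\<^sub>n = d\<^sub>n\<close> is the same event as \<open>a\<^sub>n = d\<^sub>n\<close>.\<close>

lemma gauss_map_measurable [measurable]: "gauss_map \<in> borel_measurable borel"
  unfolding gauss_map_def frac_def by measurable

lemma funpow_gauss_map_measurable [measurable]: "(gauss_map ^^ n) \<in> borel_measurable borel"
  by (induction n) (simp_all add: measurable_comp[OF _ gauss_map_measurable])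

lemma cf_digit_measurable [measurable]: "Measurable.pred borel (\<lambda>x. cf_digit n x = k)"
  unfolding cf_digit_def by measurable

lemma emeasure_eq_measure_unit:
  "X \<subseteq> {0<..<1::real} \<Longrightarrow> emeasure lborel X = ennreal (measure lborel X)"
proof (rule emeasure_eq_ennreal_measure)
  assume "X \<subseteq> {0<..<1}"
  then have "emeasure lborel X \<le> emeasure lborel {0<..<1::real}" by (intro emeasure_mono) auto
  then show "emeasure lborel X \<noteq> top" by (auto simp: top_unique)
qed

lemma measure_le_1_of_subset_unit: "X \<subseteq> {0<..<1::real} \<Longrightarrow> measure lborel X \<le> 1"
  using emeasure_mono[of X "{0<..<1}" lborel] emeasure_eq_measure_unit[of X] by simp

lemma fmeasurable_of_subset_unit:
  "X \<subseteq> {0<..<1::real} \<Longrightarrow> X \<in> sets borel \<Longrightarrow> X \<in> fmeasurable lborel"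
  by (intro fmeasurableI) (auto simp: emeasure_eq_measure_unit)

lemma gauss_map_inverse_branch: "u \<in> {0..<1} \<Longrightarrow> gauss_map (1 / (real j + u)) = u"
  unfolding gauss_map_def by (cases "j = 0 \<and> u = 0") (auto simp: frac_def floor_unique)

lemma nn_integral_inverse_branch:
  fixes H :: "real \<Rightarrow> ennreal"
  assumes j: "j \<ge> 1" and [measurable]: "H \<in> borel_measurable borel"
  shows "(\<integral>\<^sup>+x. H x * indicator {1/(real j+1)..1/real j} x \<partial>lborel)
       = (\<integral>\<^sup>+y. H (1/(real j+y)) * ennreal (1/(real j+y)^2) * indicator {0..1} y \<partial>lborel)"
proof -
  define g where "g t = 1/(real j+1-t)" for t :: real
  define g' where "g' t = 1/(real j+1-t)^2" for t :: real
  have deriv: "(g has_real_derivative g' t) (at t)" if "t \<in> {0..1}" for t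
  proof -
    have ne: "real j + 1 - t \<noteq> 0" using that j by auto
    show ?thesis unfolding g_def g'_def
      by (rule derivative_eq_intros refl | use ne in \<open>auto simp: power2_eq_square field_simps\<close>)+
  qed
  have "continuous_on {0..1} g'" unfolding g'_def
    using j by (intro continuous_intros) auto
  then have "(\<integral>\<^sup>+x. H x * indicator {g 0..g 1} x \<partial>lborel)
     = (\<integral>\<^sup>+t. H (g t) * g' t * indicator {0..1} t \<partial>lborel)"
    by (intro nn_integral_substitution_aux) (use deriv in \<open>auto simp: g'_def\<close>)
  also have "\<dots> = ennreal \<bar>-1\<bar> * (\<integral>\<^sup>+y. H (g (1 + (-1)*y)) * g' (1 + (-1)*y) * indicator {0..1} (1 + (-1)*y) \<partial>lborel)"
    by (rule nn_integral_real_affine) (auto simp: g_def g'_def)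
  also have "\<dots> = (\<integral>\<^sup>+y. H (1/(real j+y)) * ennreal (1/(real j+y)^2) * indicator {0..1} y \<partial>lborel)"
    by (simp, intro nn_integral_cong) (auto simp: g_def g'_def indicator_def algebra_simps)
  finally show ?thesis by (simp add: g_def)
qed

text \<open>\<open>cylinder js\<close> is the set of \<open>x\<close> whose first continued fraction digits are \<open>js\<close>
  (up to a countable set of endpoints), \<open>cf_branch js\<close> is the inverse branch of
  \<open>gauss_map ^^ length js\<close> onto it, and \<open>cf_branch_deriv js\<close> is the absolute value of its derivative.\<close>

fun cylinder :: "nat list \<Rightarrow> real set" where
  "cylinder [] = {0<..<1}"
| "cylinder (j # js) = {x \<in> {1/(real j+1)..1/real j}. gauss_map x \<in> cylinder js}"

fun cf_branch :: "nat list \<Rightarrow> real \<Rightarrow> real" where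
  "cf_branch [] z = z"
| "cf_branch (j # js) z = 1 / (real j + cf_branch js z)"

fun cf_branch_deriv :: "nat list \<Rightarrow> real \<Rightarrow> real" where
  "cf_branch_deriv [] z = 1"
| "cf_branch_deriv (j # js) z = cf_branch_deriv js z / (real j + cf_branch js z)^2"

lemma cylinder_subset_unit: "cylinder js \<subseteq> {0<..<1}"
proof (induction js)
  case (Cons j js)
  show ?case
  proof
    fix x assume x: "x \<in> cylinder (j # js)"
    then have "j \<ge> 1" by (cases j) auto
    moreover have "x \<in> {1/(real j+1)..1/real j}" using x by auto
    ultimately have "0 < x" "x \<le> 1"
      by (auto intro: less_le_trans[rotated] order.trans[of _ "1/real j"])
    moreover have "x \<noteq> 1" using x Cons.IH by (auto simp: gauss_map_def)
    ultimately show "x \<in> {0<..<1}" by auto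
  qed
qed simp

lemma cylinder_measurable [measurable]: "cylinder js \<in> sets borel"
proof (induction js)
  case (Cons j js)
  have "cylinder (j # js) = {1/(real j+1)..1/real j} \<inter> (gauss_map -` cylinder js \<inter> space borel)"
    by auto
  also have "\<dots> \<in> sets borel"
    using Cons by (intro sets.Int measurable_sets[OF gauss_map_measurable]) auto
  finally show ?case .
qed simp

lemma cf_branch_measurable [measurable]: "cf_branch js \<in> borel_measurable borel"
  by (induction js) simp_all

lemma cf_branch_in_unit: "z \<in> {0<..<1} \<Longrightarrow> \<forall>j\<in>set js. j \<ge> 1 \<Longrightarrow> cf_branch js z \<in> {0<..<1}"
proof (induction js)
  case (Cons j js)
  then have "cf_branch js z \<in> {0<..<1}" "real j \<ge> 1" by auto
  then show ?case by (auto simp: field_simps)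
qed simp

lemma funpow_gauss_map_cf_branch:
  assumes "z \<in> {0<..<1}" "\<forall>j\<in>set js. j \<ge> 1"
  shows "(gauss_map ^^ length js) (cf_branch js z) = z"
  using assms
proof (induction js)
  case (Cons j js)
  have "cf_branch js z \<in> {0<..<1}" using cf_branch_in_unit Cons.prems by auto
  then have "gauss_map (cf_branch (j # js) z) = cf_branch js z"
    by (simp add: gauss_map_inverse_branch)
  then show ?case using Cons by (simp add: funpow_Suc_right del: funpow.simps)
qed simp

lemma nn_integral_cylinder:
  assumes "\<forall>j\<in>set js. j \<ge> 1" and "F \<in> borel_measurable borel"
  shows "(\<integral>\<^sup>+x. F x * indicator (cylinder js) x \<partial>lborel)
       = (\<integral>\<^sup>+z. F (cf_branch js z) * ennreal (cf_branch_deriv js z) * indicator {0<..<1} z \<partial>lborel)"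
  using assms
proof (induction js arbitrary: F)
  case (Cons j js)
  note [measurable] = Cons.prems(2)
  have j: "j \<ge> 1" and js: "\<forall>j\<in>set js. j \<ge> 1" using Cons.prems by auto
  have deriv_nonneg: "cf_branch_deriv js z \<ge> 0" for z
    by (induction js) auto
  have "(\<integral>\<^sup>+x. F x * indicator (cylinder (j # js)) x \<partial>lborel)
      = (\<integral>\<^sup>+x. (F x * indicator (cylinder js) (gauss_map x)) * indicator {1/(real j+1)..1/real j} x \<partial>lborel)"
    by (intro nn_integral_cong) (auto simp: indicator_def)
  also have "\<dots> = (\<integral>\<^sup>+y. (F (1/(real j+y)) * indicator (cylinder js) (gauss_map (1/(real j+y))))
                          * ennreal (1/(real j+y)^2) * indicator {0..1} y \<partial>lborel)"
    by (rule nn_integral_inverse_branch[OF j]) measurable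
  also have "\<dots> = (\<integral>\<^sup>+y. (F (1/(real j+y)) * ennreal (1/(real j+y)^2)) * indicator (cylinder js) y \<partial>lborel)"
  proof (intro nn_integral_cong)
    fix y :: real
    have "gauss_map (1/(real j+y)) = (if y = 1 then 0 else y)" if "y \<in> {0..1}"
      using that gauss_map_inverse_branch[of y j] gauss_map_inverse_branch[of 0 "Suc j"]
      by (auto simp: add.commute)
    then show "(F (1/(real j+y)) * indicator (cylinder js) (gauss_map (1/(real j+y))))
                 * ennreal (1/(real j+y)^2) * indicator {0..1} y
             = (F (1/(real j+y)) * ennreal (1/(real j+y)^2)) * indicator (cylinder js) y"
      using cylinder_subset_unit[of js] by (auto simp: indicator_def)
  qed
  also have "\<dots> = (\<integral>\<^sup>+z. (F (1/(real j+cf_branch js z)) * ennreal (1/(real j+cf_branch js z)^2))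
                          * ennreal (cf_branch_deriv js z) * indicator {0<..<1} z \<partial>lborel)"
    by (rule Cons.IH[OF js]) measurable
  also have "\<dots> = (\<integral>\<^sup>+z. F (cf_branch (j # js) z) * ennreal (cf_branch_deriv (j # js) z)
                          * indicator {0<..<1} z \<partial>lborel)"
    by (intro nn_integral_cong) (simp add: divide_inverse ennreal_mult deriv_nonneg ac_simps)
  finally show ?case .
qed simp

text \<open>The constraint \<open>p' \<le> p + (q - q')\<close> is what propagates \<open>q' \<le> q\<close> through the induction.\<close>

lemma cf_branch_mobius:
  assumes "\<forall>j\<in>set js. j \<ge> 1"
  shows "\<exists>p p' q q'. 0 \<le> p \<and> 0 \<le> p' \<and> 0 < q \<and> 0 \<le> q' \<and> q' \<le> q \<and> p' \<le> p + (q - q') \<and>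
     (\<forall>z\<in>{0<..<1}. cf_branch js z = (p + p'*z) / (q + q'*z) \<and> cf_branch_deriv js z = 1 / (q + q'*z)^2)"
  using assms
proof (induction js)
  case Nil
  show ?case by (rule exI[of _ 0], rule exI[of _ 1], rule exI[of _ 1], rule exI[of _ 0]) auto
next
  case (Cons j js)
  then have j: "real j \<ge> 1" and "\<forall>j\<in>set js. j \<ge> 1" by auto
  then obtain p p' q q' where h: "0 \<le> p" "0 \<le> p'" "0 < q" "0 \<le> q'" "q' \<le> q" "p' \<le> p + (q - q')"
    and e: "\<forall>z\<in>{0<..<1}. cf_branch js z = (p + p'*z) / (q + q'*z) \<and> cf_branch_deriv js z = 1 / (q + q'*z)^2"
    using Cons.IH by blast
  show ?case
  proof (rule exI[of _ q], rule exI[of _ q'], rule exI[of _ "real j*q + p"], rule exI[of _ "real j*q' + p'"],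
      intro conjI ballI)
    show "0 \<le> q" "0 \<le> q'" "0 \<le> real j * q' + p'" using h j by auto
    show "0 < real j * q + p" using h j by (smt (verit) mult_pos_pos)
    have "(real j - 1) * q' \<le> (real j - 1) * q" using h j by (intro mult_left_mono) auto
    then show "real j * q' + p' \<le> real j * q + p" using h by (simp add: algebra_simps)
    then show "q' \<le> q + (real j * q + p - (real j * q' + p'))" using h by simp
  next
    fix z :: real assume z: "z \<in> {0<..<1}"
    have Q: "q + q'*z > 0" using h z by (smt (verit) mult_nonneg_nonneg greaterThanLessThan_iff)
    have P: "p + p'*z \<ge> 0" using h z by simp
    define D where "D = real j * (q + q'*z) + (p + p'*z)"
    have D: "D > 0" using Q P j unfolding D_def by (smt (verit) mult_pos_pos)
    have ps: "cf_branch js z = (p + p'*z) / (q + q'*z)" and ws: "cf_branch_deriv js z = 1 / (q + q'*z)^2"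
      using e z by auto
    have jp: "real j + cf_branch js z = D / (q + q'*z)"
      using Q ps unfolding D_def by (simp add: field_simps)
    have Dq: "D = real j * q + p + (real j * q' + p') * z" unfolding D_def by (simp add: algebra_simps)
    show "cf_branch (j # js) z = (q + q'*z) / (real j * q + p + (real j * q' + p') * z)"
      using jp Q D Dq by simp
    have "cf_branch_deriv (j # js) z = (1 / (q + q'*z)^2) / (D / (q + q'*z))^2" using jp ws by simp
    also have "\<dots> = 1 / D^2" using Q D by (simp add: power_divide)
    finally show "cf_branch_deriv (j # js) z = 1 / (real j * q + p + (real j * q' + p') * z)^2"
      using Dq by simp
  qed
qed

lemma cf_branch_deriv_distortion:
  assumes "\<forall>j\<in>set js. j \<ge> 1"
  shows "\<exists>c>0. \<forall>z\<in>{0<..<1}. c/4 \<le> cf_branch_deriv js z \<and> cf_branch_deriv js z \<le> c"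
proof -
  obtain p p' q q' where h: "0 < q" "0 \<le> q'" "q' \<le> q"
    and e: "\<forall>z\<in>{0<..<1}. cf_branch_deriv js z = 1 / (q + q'*z)^2"
    using cf_branch_mobius[OF assms] by blast
  show ?thesis
  proof (intro exI[of _ "1/q^2"] conjI ballI)
    fix z :: real assume z: "z \<in> {0<..<1}"
    have lo: "q \<le> q + q'*z" and hi: "q + q'*z \<le> 2*q"
      using h z mult_left_mono[of z 1 q'] by auto
    have sq_lo: "q^2 \<le> (q + q'*z)^2" by (rule power_mono[OF lo]) (use h in simp)
    have sq_hi: "(q + q'*z)^2 \<le> (2*q)^2" by (rule power_mono[OF hi]) (use lo h in simp)
    have "1/(2*q)^2 \<le> 1/(q + q'*z)^2" by (rule frac_le) (use sq_hi lo h in auto)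
    moreover have "1/(q + q'*z)^2 \<le> 1/q^2" by (rule frac_le) (use sq_lo h in auto)
    ultimately show "1/q^2/4 \<le> cf_branch_deriv js z" "cf_branch_deriv js z \<le> 1/q^2"
      using e z by (simp_all add: power_mult_distrib)
  qed (use h in simp)
qed

lemma emeasure_cylinder_preimage:
  assumes "\<forall>j\<in>set js. j \<ge> 1" and [measurable]: "B \<in> sets borel"
  shows "emeasure lborel (cylinder js \<inter> {x. (gauss_map ^^ length js) x \<in> B})
       = (\<integral>\<^sup>+z. ennreal (cf_branch_deriv js z) * indicator ({0<..<1} \<inter> B) z \<partial>lborel)"
proof -
  have meas: "cylinder js \<inter> {x. (gauss_map ^^ length js) x \<in> B} \<in> sets lborel" by measurable
  have "emeasure lborel (cylinder js \<inter> {x. (gauss_map ^^ length js) x \<in> B})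
     = (\<integral>\<^sup>+x. indicator {x. (gauss_map ^^ length js) x \<in> B} x * indicator (cylinder js) x \<partial>lborel)"
    unfolding nn_integral_indicator[symmetric, OF meas]
    by (intro nn_integral_cong) (auto simp: indicator_def)
  also have "\<dots> = (\<integral>\<^sup>+z. indicator {x. (gauss_map ^^ length js) x \<in> B} (cf_branch js z)
                          * ennreal (cf_branch_deriv js z) * indicator {0<..<1} z \<partial>lborel)"
    by (rule nn_integral_cylinder[OF assms(1)]) measurable
  also have "\<dots> = (\<integral>\<^sup>+z. ennreal (cf_branch_deriv js z) * indicator ({0<..<1} \<inter> B) z \<partial>lborel)"
    using funpow_gauss_map_cf_branch[OF _ assms(1)]
    by (intro nn_integral_cong) (auto simp: indicator_def)
  finally show ?thesis .
qed

lemma emeasure_cylinder_preimage_bounds: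
  assumes "\<forall>j\<in>set js. j \<ge> 1" and [measurable]: "B \<in> sets borel"
  shows "emeasure lborel (cylinder js \<inter> {x. (gauss_map ^^ length js) x \<in> B})
           \<le> 4 * emeasure lborel (cylinder js) * emeasure lborel ({0<..<1} \<inter> B)"
    and "emeasure lborel (cylinder js) * emeasure lborel ({0<..<1} \<inter> B)
           \<le> 4 * emeasure lborel (cylinder js \<inter> {x. (gauss_map ^^ length js) x \<in> B})"
proof -
  obtain c where c: "c > 0" "\<And>z. z \<in> {0<..<1} \<Longrightarrow> c/4 \<le> cf_branch_deriv js z \<and> cf_branch_deriv js z \<le> c"
    using cf_branch_deriv_distortion[OF assms(1)] by blast
  let ?P = "\<lambda>C. emeasure lborel (cylinder js \<inter> {x. (gauss_map ^^ length js) x \<in> C})"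
  have between: "ennreal (c/4) * emeasure lborel ({0<..<1} \<inter> C) \<le> ?P C"
    "?P C \<le> ennreal c * emeasure lborel ({0<..<1} \<inter> C)"
    if [measurable]: "C \<in> sets borel" for C
  proof -
    have "ennreal a * emeasure lborel ({0<..<1} \<inter> C)
        = (\<integral>\<^sup>+z. ennreal a * indicator ({0<..<1} \<inter> C) z \<partial>lborel)" for a
      by (rule nn_integral_cmult_indicator[symmetric]) measurable
    then show "ennreal (c/4) * emeasure lborel ({0<..<1} \<inter> C) \<le> ?P C"
      "?P C \<le> ennreal c * emeasure lborel ({0<..<1} \<inter> C)"
      unfolding emeasure_cylinder_preimage[OF assms(1) that]
      using c by (auto intro!: nn_integral_mono ennreal_leI simp: indicator_def)
  qed
  have "?P UNIV = emeasure lborel (cylinder js)" "emeasure lborel (({0<..<1}::real set) \<inter> UNIV) = 1"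
    by auto
  then have c_le: "ennreal c \<le> 4 * emeasure lborel (cylinder js)"
    and le_c: "emeasure lborel (cylinder js) \<le> ennreal c"
    using between[of UNIV] c ennreal_mult'[of 4 "c/4"] by (auto intro: order.trans[OF _ mult_left_mono])
  show "?P B \<le> 4 * emeasure lborel (cylinder js) * emeasure lborel ({0<..<1} \<inter> B)"
    using order.trans[OF between(2)[OF assms(2)] mult_right_mono[OF c_le]] by simp
  have "emeasure lborel (cylinder js) * emeasure lborel ({0<..<1} \<inter> B)
      \<le> ennreal c * emeasure lborel ({0<..<1} \<inter> B)"
    using le_c by (rule mult_right_mono) simp
  also have "\<dots> = 4 * (ennreal (c/4) * emeasure lborel ({0<..<1} \<inter> B))"
    using c ennreal_mult'[of 4 "c/4"] by (simp add: mult.assoc)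
  also have "\<dots> \<le> 4 * ?P B"
    using between(1)[OF assms(2)] by (intro mult_left_mono) auto
  finally show "emeasure lborel (cylinder js) * emeasure lborel ({0<..<1} \<inter> B) \<le> 4 * ?P B" .
qed

definition infinite_cf :: "real set" where
  "infinite_cf = {x. \<forall>n. (gauss_map ^^ n) x \<in> {0<..<1}}"

definition cf_prefix :: "nat \<Rightarrow> real \<Rightarrow> nat list" where
  "cf_prefix n x = map (\<lambda>i. cf_digit (Suc i) x) [0..<n]"

lemma infinite_cf_measurable [measurable]: "infinite_cf \<in> sets borel"
proof -
  have "infinite_cf = (\<Inter>n. (gauss_map ^^ n) -` {0<..<1} \<inter> space borel)"
    by (auto simp: infinite_cf_def)
  also have "\<dots> \<in> sets borel"
    by (intro sets.countable_INT'' measurable_sets[OF funpow_gauss_map_measurable]) auto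
  finally show ?thesis .
qed

lemma infinite_cf_subset_unit: "infinite_cf \<subseteq> {0<..<1}"
  unfolding infinite_cf_def by (auto dest: spec[of _ 0])

lemma gauss_map_infinite_cf:
  assumes "x \<in> infinite_cf"
  shows "gauss_map x \<in> infinite_cf"
proof -
  have "(gauss_map ^^ n) (gauss_map x) = (gauss_map ^^ Suc n) x" for n
    by (simp only: funpow_Suc_right comp_def)
  then show ?thesis using assms unfolding infinite_cf_def by (simp del: funpow.simps)
qed

lemma irrational_in_infinite_cf:
  assumes "x \<in> {0<..1}" "x \<notin> \<rat>"
  shows "x \<in> infinite_cf"
proof -
  have "(gauss_map ^^ n) x \<notin> \<rat> \<and> (gauss_map ^^ n) x \<in> {0<..<1}" for n
  proof (induction n)
    case 0
    then show ?case using assms by (cases "x = 1") auto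
  next
    case (Suc n)
    define y where "y = (gauss_map ^^ n) x"
    have "y \<notin> \<rat>" using Suc y_def by auto
    then have "1/y \<notin> \<rat>" using Rats_inverse[of "1/y"] by auto
    moreover have "1/y = gauss_map y + of_int \<lfloor>1/y\<rfloor>"
      unfolding gauss_map_def frac_def by simp
    ultimately have "gauss_map y \<notin> \<rat>"
      by (metis Rats_add Rats_of_int)
    moreover have "0 \<le> gauss_map y" "gauss_map y < 1"
      unfolding gauss_map_def by (auto simp: frac_lt_1)
    ultimately show ?case by (auto simp: y_def order.order_iff_strict)
  qed
  then show ?thesis unfolding infinite_cf_def by auto
qed

lemma null_sets_unit_diff_infinite_cf: "{0<..1} - infinite_cf \<in> null_sets lborel"
proof (rule null_sets_subset)
  show "\<rat> \<in> null_sets lborel" by (rule countable_imp_null_set_lborel[OF countable_rat])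
  show "{0<..1} - infinite_cf \<subseteq> \<rat>" using irrational_in_infinite_cf by blast
qed measurable

lemma emeasure_inter_infinite_cf:
  assumes "A \<subseteq> {0<..<1}" "A \<in> sets borel"
  shows "emeasure lborel (A \<inter> infinite_cf) = emeasure lborel A"
proof -
  have "A \<inter> infinite_cf = A - ({0<..1} - infinite_cf)" using assms(1) by auto
  then show ?thesis using emeasure_Diff_null_set[OF null_sets_unit_diff_infinite_cf] assms(2) by simp
qed

lemma cf_digit_funpow: "cf_digit (Suc n) x = cf_digit 1 ((gauss_map ^^ n) x)"
  unfolding cf_digit_def by simp

lemma length_cf_prefix [simp]: "length (cf_prefix n x) = n"
  unfolding cf_prefix_def by simp

lemma nth_cf_prefix: "k < n \<Longrightarrow> cf_prefix n x ! k = cf_digit (Suc k) x"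
  unfolding cf_prefix_def by simp

lemma cf_prefix_measurable [measurable]: "cf_prefix n \<in> borel \<rightarrow>\<^sub>M count_space UNIV"
proof (subst measurable_count_space_eq2_countable, intro conjI ballI)
  fix js :: "nat list"
  have "cf_prefix n -` {js} \<inter> space borel = {x. length js = n \<and> (\<forall>i<n. cf_digit (Suc i) x = js ! i)}"
    by (auto simp: list_eq_iff_nth_eq nth_cf_prefix)
  also have "\<dots> \<in> sets borel" by measurable
  finally show "cf_prefix n -` {js} \<inter> space borel \<in> sets borel" .
qed simp

lemma cf_prefix_Suc: "cf_prefix (Suc n) x = cf_digit 1 x # cf_prefix n (gauss_map x)"
  unfolding cf_prefix_def cf_digit_def
  by (simp add: upt_conv_Cons map_Suc_upt[symmetric] funpow_Suc_right del: upt_Suc funpow.simps)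

lemma first_cf_digit_iff:
  assumes x: "x \<in> {0<..<1}" and "gauss_map x \<noteq> 0"
  shows "x \<in> {1/(real j+1)..1/real j} \<longleftrightarrow> cf_digit 1 x = j"
proof -
  have y: "1 < 1/x" using x by auto
  have "1/x \<noteq> real j + 1"
    using assms(2) unfolding gauss_map_def by (auto simp: frac_eq_0_iff)
  then have "x \<in> {1/(real j+1)..1/real j} \<longleftrightarrow> real j \<le> 1/x \<and> 1/x < real j + 1"
    using x y by (cases "j = 0") (auto simp: field_simps)
  also have "\<dots> \<longleftrightarrow> cf_digit 1 x = j"
    using y unfolding cf_digit_def by (auto simp: nat_eq_iff floor_eq_iff)
  finally show ?thesis .
qed

lemma cylinder_iff_cf_prefix:
  "x \<in> infinite_cf \<Longrightarrow> x \<in> cylinder js \<longleftrightarrow> cf_prefix (length js) x = js"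
proof (induction js arbitrary: x)
  case Nil
  then show ?case using infinite_cf_subset_unit by (auto simp: cf_prefix_def)
next
  case (Cons j js)
  then have "x \<in> {0<..<1}" "gauss_map x \<in> {0<..<1}" "gauss_map x \<in> infinite_cf"
    using gauss_map_infinite_cf infinite_cf_subset_unit by blast+
  then show ?case
    using first_cf_digit_iff[of x j] Cons.IH by (auto simp: cf_prefix_Suc)
qed

lemma cf_digit_ge_1:
  assumes "x \<in> infinite_cf"
  shows "cf_digit (Suc n) x \<ge> 1"
proof -
  have "(gauss_map ^^ n) x \<in> {0<..<1}" using assms unfolding infinite_cf_def by blast
  then have "1 < 1 / (gauss_map ^^ n) x" by simp
  then have "1 \<le> \<lfloor>1 / (gauss_map ^^ n) x\<rfloor>" by (simp add: le_floor_iff)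
  then show ?thesis using nat_mono by (fastforce simp: cf_digit_def)
qed

lemma emeasure_cf_prefix_preimage:
  assumes [measurable]: "B \<in> sets borel"
  shows "emeasure lborel {x \<in> infinite_cf. cf_prefix n x \<in> S \<and> (gauss_map ^^ n) x \<in> B}
       = (\<integral>\<^sup>+js. emeasure lborel (cylinder js \<inter> {x. (gauss_map ^^ length js) x \<in> B})
            \<partial>count_space {js \<in> S. length js = n \<and> (\<forall>j\<in>set js. j \<ge> 1)})"
proof -
  define I where "I = {js \<in> S. length js = n \<and> (\<forall>j\<in>set js. j \<ge> 1)}"
  define X where "X js = cylinder js \<inter> {x. (gauss_map ^^ n) x \<in> B} \<inter> infinite_cf" for js
  have "countable I"
    by (rule countable_subset[of _ "lists UNIV"]) (auto simp: I_def intro: countable_lists)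
  moreover have "disjoint_family_on X I"
    unfolding disjoint_family_on_def X_def I_def using cylinder_iff_cf_prefix by fastforce
  ultimately have "emeasure lborel (\<Union>(X ` I)) = (\<integral>\<^sup>+js. emeasure lborel (X js) \<partial>count_space I)"
    by (intro emeasure_UN_countable) (auto simp: X_def)
  moreover have "{x \<in> infinite_cf. cf_prefix n x \<in> S \<and> (gauss_map ^^ n) x \<in> B} = \<Union>(X ` I)"
    unfolding X_def I_def using cylinder_iff_cf_prefix cf_digit_ge_1
    by (fastforce simp: cf_prefix_def)
  ultimately have "emeasure lborel {x \<in> infinite_cf. cf_prefix n x \<in> S \<and> (gauss_map ^^ n) x \<in> B}
      = (\<integral>\<^sup>+js. emeasure lborel (X js) \<partial>count_space I)"
    by simp
  also have "\<dots> = (\<integral>\<^sup>+js. emeasure lborel (cylinder js \<inter> {x. (gauss_map ^^ length js) x \<in> B})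
                    \<partial>count_space I)"
  proof (intro nn_integral_cong)
    fix js assume "js \<in> space (count_space I)"
    then have n: "n = length js" by (simp add: I_def)
    have "cylinder js \<inter> {x. (gauss_map ^^ n) x \<in> B} \<in> sets borel" by measurable
    then show "emeasure lborel (X js) = emeasure lborel (cylinder js \<inter> {x. (gauss_map ^^ length js) x \<in> B})"
      unfolding X_def n using cylinder_subset_unit[of js] by (intro emeasure_inter_infinite_cf) auto
  qed
  finally show ?thesis unfolding I_def .
qed

lemma emeasure_cf_prefix_preimage_bounds:
  fixes S :: "nat list set" and n :: nat
  assumes [measurable]: "B \<in> sets borel"
  defines "A \<equiv> {x \<in> infinite_cf. cf_prefix n x \<in> S}"
    and "AB \<equiv> {x \<in> infinite_cf. cf_prefix n x \<in> S \<and> (gauss_map ^^ n) x \<in> B}"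
  shows "emeasure lborel AB \<le> 4 * emeasure lborel ({0<..<1} \<inter> B) * emeasure lborel A"
    and "emeasure lborel ({0<..<1} \<inter> B) * emeasure lborel A \<le> 4 * emeasure lborel AB"
proof -
  let ?I = "{js \<in> S. length js = n \<and> (\<forall>j\<in>set js. j \<ge> 1)}"
  let ?b = "emeasure lborel ({0<..<1} \<inter> B)"
  have A: "emeasure lborel A = (\<integral>\<^sup>+js. emeasure lborel (cylinder js) \<partial>count_space ?I)"
    using emeasure_cf_prefix_preimage[of UNIV n S] by (simp add: A_def)
  have AB: "emeasure lborel AB = (\<integral>\<^sup>+js. emeasure lborel (cylinder js \<inter> {x. (gauss_map ^^ length js) x \<in> B})
                                  \<partial>count_space ?I)"
    unfolding AB_def by (rule emeasure_cf_prefix_preimage[OF assms(1)])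
  have "emeasure lborel AB \<le> (\<integral>\<^sup>+js. (4 * ?b) * emeasure lborel (cylinder js) \<partial>count_space ?I)"
    unfolding AB using emeasure_cylinder_preimage_bounds(1)[OF _ assms(1)]
    by (intro nn_integral_mono) (auto simp: ac_simps)
  also have "\<dots> = 4 * ?b * emeasure lborel A" unfolding A by (rule nn_integral_cmult) simp
  finally show "emeasure lborel AB \<le> 4 * ?b * emeasure lborel A" .
  have "?b * emeasure lborel A = (\<integral>\<^sup>+js. ?b * emeasure lborel (cylinder js) \<partial>count_space ?I)"
    unfolding A by (rule nn_integral_cmult[symmetric]) simp
  also have "\<dots> \<le> (\<integral>\<^sup>+js. 4 * emeasure lborel (cylinder js \<inter> {x. (gauss_map ^^ length js) x \<in> B})
                    \<partial>count_space ?I)"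
    using emeasure_cylinder_preimage_bounds(2)[OF _ assms(1)]
    by (intro nn_integral_mono) (auto simp: ac_simps)
  also have "\<dots> = 4 * emeasure lborel AB" unfolding AB by (rule nn_integral_cmult) simp
  finally show "?b * emeasure lborel A \<le> 4 * emeasure lborel AB" .
qed

lemma measure_cf_prefix_preimage_bounds:
  fixes S :: "nat list set" and n :: nat
  assumes [measurable]: "B \<in> sets borel"
  defines "A \<equiv> {x \<in> infinite_cf. cf_prefix n x \<in> S}"
    and "AB \<equiv> {x \<in> infinite_cf. cf_prefix n x \<in> S \<and> (gauss_map ^^ n) x \<in> B}"
  shows "measure lborel AB \<le> 4 * measure lborel ({0<..<1} \<inter> B) * measure lborel A"
    and "measure lborel ({0<..<1} \<inter> B) * measure lborel A \<le> 4 * measure lborel AB"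
proof -
  have "A \<subseteq> {0<..<1}" "AB \<subseteq> {0<..<1}" "{0<..<1} \<inter> B \<subseteq> {0<..<1}"
    unfolding A_def AB_def using infinite_cf_subset_unit by auto
  note finite = this[THEN emeasure_eq_measure_unit]
  have prod3: "4 * ennreal b * ennreal a = ennreal (4 * b * a)" and prod2: "ennreal b * ennreal a = ennreal (b * a)"
    if "0 \<le> a" "0 \<le> b" for a b :: real
    using that ennreal_mult[of "4 * b" a] by (simp_all add: ennreal_mult)
  have prod1: "4 * ennreal a = ennreal (4 * a)" if "0 \<le> a" for a :: real
    using that by (simp add: ennreal_mult)
  show "measure lborel AB \<le> 4 * measure lborel ({0<..<1} \<inter> B) * measure lborel A"
    using emeasure_cf_prefix_preimage_bounds(1)[OF assms(1), of n S]
    unfolding A_def[symmetric] AB_def[symmetric] finite prod3[OF measure_nonneg measure_nonneg]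
    by simp
  show "measure lborel ({0<..<1} \<inter> B) * measure lborel A \<le> 4 * measure lborel AB"
    using emeasure_cf_prefix_preimage_bounds(2)[OF assms(1), of n S]
    unfolding A_def[symmetric] AB_def[symmetric] finite prod2[OF measure_nonneg measure_nonneg]
      prod1[OF measure_nonneg]
    by simp
qed

lemma measure_first_cf_digit:
  assumes "d \<ge> 1"
  shows "measure lborel ({0<..<1} \<inter> {y. cf_digit 1 y = d}) = 1 / (real d * (real d + 1))"
proof -
  let ?B = "{0<..<1} \<inter> {y. cf_digit 1 y = d}"
  have d: "real d \<ge> 1" using assms by simp
  have B: "?B \<in> fmeasurable lborel" by (rule fmeasurable_of_subset_unit) (blast, measurable)
  have "{1/(real d+1)<..<1/real d} \<subseteq> ?B"
  proof
    fix y assume y: "y \<in> {1/(real d+1)<..<1/real d}"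
    then have "0 < y" "y < 1" using d by (auto intro: less_trans[rotated] less_le_trans)
    moreover have "real d < 1/y" "1/y < real d + 1" using y \<open>0 < y\<close> d by (auto simp: field_simps)
    then have "\<lfloor>1/y\<rfloor> = int d" by (intro floor_unique) auto
    ultimately show "y \<in> ?B" unfolding cf_digit_def by simp
  qed
  then have "measure lborel {1/(real d+1)<..<1/real d} \<le> measure lborel ?B"
    using B by (intro measure_mono_fmeasurable) auto
  moreover have "?B \<subseteq> {1/(real d+1)..1/real d}"
  proof
    fix y assume y: "y \<in> ?B"
    then have "0 < y" "\<lfloor>1/y\<rfloor> = int d" using assms unfolding cf_digit_def by auto
    then show "y \<in> {1/(real d+1)..1/real d}"
      using d by (auto simp: field_simps floor_eq_iff)
  qed
  then have "measure lborel ?B \<le> measure lborel {1/(real d+1)..1/real d}"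
    using fmeasurable_cbox[of "1/(real d+1)" "1/real d"]
    by (intro measure_mono_fmeasurable) (auto simp: cbox_interval)
  moreover have "1/real d - 1/(real d+1) = 1 / (real d * (real d + 1))" using d by (simp add: field_simps)
  ultimately show ?thesis using d by (simp add: frac_le)
qed

lemma measure_cf_digit_eq_le:
  assumes "e \<ge> 1"
  shows "measure lborel {x \<in> infinite_cf. cf_digit (Suc n) x = e} \<le> 4 / real e^2"
proof -
  have "{x \<in> infinite_cf. cf_digit (Suc n) x = e}
      = {x \<in> infinite_cf. cf_prefix n x \<in> UNIV \<and> (gauss_map ^^ n) x \<in> {y. cf_digit 1 y = e}}"
    using cf_digit_funpow[of n] by auto
  also have "measure lborel \<dots> \<le> 4 * measure lborel ({0<..<1} \<inter> {y. cf_digit 1 y = e})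
      * measure lborel {x \<in> infinite_cf. cf_prefix n x \<in> UNIV}"
    by (rule measure_cf_prefix_preimage_bounds(1)) measurable
  also have "\<dots> \<le> 4 * (1 / real e^2) * 1"
  proof (intro mult_mono)
    have "1 / (real e * (real e + 1)) \<le> 1 / real e^2"
      using assms by (intro divide_left_mono) (auto simp: power2_eq_square)
    then show "measure lborel ({0<..<1} \<inter> {y. cf_digit 1 y = e}) \<le> 1 / real e^2"
      using measure_first_cf_digit[OF assms] by simp
    show "measure lborel {x \<in> infinite_cf. cf_prefix n x \<in> UNIV} \<le> 1"
      using infinite_cf_subset_unit by (intro measure_le_1_of_subset_unit) auto
  qed auto
  finally show ?thesis by simp
qed

lemma cf_digit_eq_infinitely_often_measurable [measurable]:
  "{x \<in> {0<..1}. infinite {n. n \<ge> 1 \<and> cf_digit n x = d n}} \<in> sets borel"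
  unfolding infinite_nat_iff_unbounded_le by measurable

lemma null_sets_cf_digit_eq_infinitely_often:
  assumes "\<And>n. d (Suc n) \<ge> 1" and "summable (\<lambda>n. 1 / (real (d (Suc n)))^2)"
  shows "{x \<in> {0<..1}. infinite {n. n \<ge> 1 \<and> cf_digit n x = d n}} \<in> null_sets lborel"
    (is "?X \<in> _")
proof -
  define F where "F k = {x \<in> infinite_cf. cf_digit (Suc k) x = d (Suc k)}" for k
  have "limsup F \<in> null_sets lborel"
  proof (rule borel_cantelli_limsup1)
    show "F k \<in> sets lborel" for k unfolding F_def by measurable
    have "F k \<subseteq> {0<..<1}" for k using infinite_cf_subset_unit by (auto simp: F_def)
    then show "emeasure lborel (F k) < \<infinity>" for k by (simp add: emeasure_eq_measure_unit)
    show "summable (\<lambda>k. measure lborel (F k))"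
    proof (rule summable_comparison_test'[OF summable_mult[OF assms(2), of 4]])
      show "norm (measure lborel (F k)) \<le> 4 * (1 / (real (d (Suc k)))^2)" for k
        using measure_cf_digit_eq_le[OF assms(1), of k] by (simp add: F_def)
    qed
  qed
  moreover have "?X \<in> sets lborel" by measurable
  moreover have "?X \<subseteq> ({0<..1} - infinite_cf) \<union> limsup F"
  proof
    fix x assume x: "x \<in> ?X"
    show "x \<in> ({0<..1} - infinite_cf) \<union> limsup F"
    proof (cases "x \<in> infinite_cf")
      case True
      have "x \<in> (\<Union>k\<in>{m..}. F k)" for m
      proof -
        from x have "infinite {n. n \<ge> 1 \<and> cf_digit n x = d n}" by blast
        then have "\<exists>n\<ge>Suc m. n \<in> {n. n \<ge> 1 \<and> cf_digit n x = d n}"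
          unfolding infinite_nat_iff_unbounded_le by (rule spec)
        then obtain n where "n \<ge> Suc m" "cf_digit n x = d n" by blast
        then show ?thesis using True by (cases n) (auto simp: F_def)
      qed
      then show ?thesis unfolding limsup_INF_SUP by blast
    qed (use x in auto)
  qed
  ultimately show ?thesis
    by (rule null_sets_subset[OF null_sets.Un[OF null_sets_unit_diff_infinite_cf]])
qed

lemma measure_cf_prefix_digit_ne:
  fixes S :: "nat list set"
  assumes "e \<ge> 1"
  shows "measure lborel {x \<in> infinite_cf. cf_prefix n x \<in> S \<and> cf_digit (Suc n) x \<noteq> e}
       \<le> (1 - 1 / (8 * real e^2)) * measure lborel {x \<in> infinite_cf. cf_prefix n x \<in> S}"
proof -
  let ?A = "{x \<in> infinite_cf. cf_prefix n x \<in> S}"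
  let ?AB = "{x \<in> infinite_cf. cf_prefix n x \<in> S \<and> (gauss_map ^^ n) x \<in> {y. cf_digit 1 y = e}}"
  have "?A \<subseteq> {0<..<1}" using infinite_cf_subset_unit by auto
  then have diff: "measure lborel (?A - ?AB) = measure lborel ?A - measure lborel ?AB"
    by (intro measure_Diff) (auto simp: emeasure_eq_measure_unit)
  have "1 / (2 * real e^2) \<le> measure lborel ({0<..<1} \<inter> {y. cf_digit 1 y = e})"
    using measure_first_cf_digit[OF assms] assms
    by (auto intro!: divide_left_mono simp: power2_eq_square)
  then have "1 / (2 * real e^2) * measure lborel ?A
      \<le> measure lborel ({0<..<1} \<inter> {y. cf_digit 1 y = e}) * measure lborel ?A"
    by (rule mult_right_mono) simp
  also have "\<dots> \<le> 4 * measure lborel ?AB"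
    by (rule measure_cf_prefix_preimage_bounds(2)) measurable
  finally have "measure lborel (?A - ?AB) \<le> (1 - 1 / (8 * real e^2)) * measure lborel ?A"
    unfolding diff by (simp add: field_simps)
  moreover have "{x \<in> infinite_cf. cf_prefix n x \<in> S \<and> cf_digit (Suc n) x \<noteq> e} = ?A - ?AB"
    using cf_digit_funpow[of n] by auto
  ultimately show ?thesis by simp
qed

lemma measure_cf_digit_avoid_le_exp:
  assumes "\<And>k. d (Suc k) \<ge> 1"
  shows "measure lborel {x \<in> infinite_cf. \<forall>k\<in>{m..<N}. cf_digit (Suc k) x \<noteq> d (Suc k)}
       \<le> exp (- (\<Sum>k\<in>{m..<N}. 1 / (8 * real (d (Suc k))^2)))"
proof (induction N)
  case 0
  show ?case using infinite_cf_subset_unit by (auto intro: measure_le_1_of_subset_unit)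
next
  case (Suc N)
  show ?case
  proof (cases "m \<le> N")
    case False
    then show ?thesis using Suc.IH by simp
  next
    case True
    define S where "S = {js. \<forall>k\<in>{m..<N}. js ! k \<noteq> d (Suc k)}"
    let ?a = "1 / (8 * real (d (Suc N))^2)"
    let ?s = "\<Sum>k\<in>{m..<N}. 1 / (8 * real (d (Suc k))^2)"
    have avoid_N: "{x \<in> infinite_cf. \<forall>k\<in>{m..<N}. cf_digit (Suc k) x \<noteq> d (Suc k)}
        = {x \<in> infinite_cf. cf_prefix N x \<in> S}"
      by (auto simp: S_def nth_cf_prefix)
    have "{x \<in> infinite_cf. \<forall>k\<in>{m..<Suc N}. cf_digit (Suc k) x \<noteq> d (Suc k)}
        = {x \<in> infinite_cf. cf_prefix N x \<in> S \<and> cf_digit (Suc N) x \<noteq> d (Suc N)}"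
      using True by (auto simp: S_def nth_cf_prefix less_Suc_eq)
    then have "measure lborel {x \<in> infinite_cf. \<forall>k\<in>{m..<Suc N}. cf_digit (Suc k) x \<noteq> d (Suc k)}
        \<le> (1 - ?a) * measure lborel {x \<in> infinite_cf. \<forall>k\<in>{m..<N}. cf_digit (Suc k) x \<noteq> d (Suc k)}"
      unfolding avoid_N using measure_cf_prefix_digit_ne[OF assms] by simp
    also have "\<dots> \<le> exp (- ?a) * exp (- ?s)"
      using Suc.IH exp_ge_add_one_self[of "- ?a"] by (intro mult_mono) auto
    also have "\<dots> = exp (- (\<Sum>k\<in>{m..<Suc N}. 1 / (8 * real (d (Suc k))^2)))"
      using True by (simp add: exp_add[symmetric])
    finally show ?thesis .
  qed
qed

lemma not_summable_nonneg_sum_unbounded: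
  fixes a :: "nat \<Rightarrow> real"
  assumes "\<And>n. 0 \<le> a n" and "\<not> summable a"
  shows "\<exists>N. t < (\<Sum>k\<in>{m..<N}. a k)"
proof -
  have "\<not> summable (\<lambda>k. a (k + m))" using assms(2) by simp
  then obtain N where "t < (\<Sum>k<N. a (k + m))"
    using summableI_nonneg_bounded[of "\<lambda>k. a (k + m)" t] assms(1) by (meson not_less)
  also have "(\<Sum>k<N. a (k + m)) = (\<Sum>k\<in>{m..<N + m}. a k)"
    using sum.shift_bounds_nat_ivl[of a 0 m N] by (simp add: atLeast0LessThan)
  finally show ?thesis by blast
qed

lemma null_sets_cf_digit_ne_eventually:
  assumes "\<And>k. d (Suc k) \<ge> 1" and "\<not> summable (\<lambda>n. 1 / (real (d (Suc n)))^2)"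
  shows "{x \<in> infinite_cf. \<forall>k\<ge>m. cf_digit (Suc k) x \<noteq> d (Suc k)} \<in> null_sets lborel"
    (is "?C \<in> _")
proof -
  define a where "a k = 1 / (8 * real (d (Suc k))^2)" for k
  have "\<not> summable a"
  proof
    assume "summable a"
    then have "summable (\<lambda>k. 8 * a k)" by (rule summable_mult)
    then show False using assms(2) by (simp add: a_def)
  qed
  have "measure lborel ?C \<le> 0 + \<epsilon>" if "\<epsilon> > 0" for \<epsilon>
  proof -
    obtain N where N: "- ln \<epsilon> < (\<Sum>k\<in>{m..<N}. a k)"
      using not_summable_nonneg_sum_unbounded[OF _ \<open>\<not> summable a\<close>] by (auto simp: a_def)
    have "?C \<subseteq> {x \<in> infinite_cf. \<forall>k\<in>{m..<N}. cf_digit (Suc k) x \<noteq> d (Suc k)}" by auto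
    then have "measure lborel ?C
        \<le> measure lborel {x \<in> infinite_cf. \<forall>k\<in>{m..<N}. cf_digit (Suc k) x \<noteq> d (Suc k)}"
      using infinite_cf_subset_unit
      by (intro measure_mono_fmeasurable fmeasurable_of_subset_unit) auto
    also have "\<dots> \<le> exp (- (\<Sum>k\<in>{m..<N}. a k))"
      unfolding a_def by (rule measure_cf_digit_avoid_le_exp[where d = d, OF assms(1)])
    also have "\<dots> \<le> exp (ln \<epsilon>)" using N by simp
    finally show ?thesis using that by simp
  qed
  then have "measure lborel ?C = 0" by (meson field_le_epsilon measure_nonneg order_antisym)
  moreover have "?C \<subseteq> {0<..<1}" using infinite_cf_subset_unit by auto
  ultimately show ?thesis by (intro null_setsI) (auto simp: emeasure_eq_measure_unit)
qed

lemma measure_cf_digit_eq_infinitely_often: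
  assumes "\<And>k. d (Suc k) \<ge> 1" and "\<not> summable (\<lambda>n. 1 / (real (d (Suc n)))^2)"
  shows "measure lborel {x \<in> {0<..1}. infinite {n. n \<ge> 1 \<and> cf_digit n x = d n}} = 1"
    (is "measure lborel ?X = 1")
proof -
  have "{0<..1} - ?X \<in> sets lborel" by measurable
  moreover have "{0<..1} - ?X \<subseteq> ({0<..1} - infinite_cf)
      \<union> (\<Union>m. {x \<in> infinite_cf. \<forall>k\<ge>m. cf_digit (Suc k) x \<noteq> d (Suc k)})"
  proof
    fix x assume x: "x \<in> {0<..1} - ?X"
    then have "\<not> infinite {n. n \<ge> 1 \<and> cf_digit n x = d n}" by blast
    then obtain m where "\<forall>n\<ge>m. n \<notin> {n. n \<ge> 1 \<and> cf_digit n x = d n}"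
      unfolding infinite_nat_iff_unbounded_le by blast
    then have "\<forall>k\<ge>m. cf_digit (Suc k) x \<noteq> d (Suc k)" by auto
    then show "x \<in> ({0<..1} - infinite_cf)
        \<union> (\<Union>m. {x \<in> infinite_cf. \<forall>k\<ge>m. cf_digit (Suc k) x \<noteq> d (Suc k)})"
      using x by blast
  qed
  ultimately have "{0<..1} - ?X \<in> null_sets lborel"
    by (rule null_sets_subset[OF null_sets.Un[OF null_sets_unit_diff_infinite_cf
          null_sets_UN[OF null_sets_cf_digit_ne_eventually[OF assms]]]])
  then have "measure lborel ({0<..1} - ({0<..1} - ?X)) = measure lborel {0<..1::real}"
    by (intro measure_Diff_null_set) auto
  moreover have "{0<..1} - ({0<..1} - ?X) = ?X" by blast
  ultimately show ?thesis by simp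
qed

theorem theorem2p1:
  fixes d :: "nat \<Rightarrow> nat"
  assumes "\<forall>n\<ge>1. prime (d n)"
  shows "{x \<in> {0<..1}. infinite {n. n \<ge> 1 \<and> prime_digit n x = d n}} \<in> sets lborel
    \<and> measure lborel {x \<in> {0<..1}. infinite {n. n \<ge> 1 \<and> prime_digit n x = d n}}
        = (if summable (\<lambda>n. 1 / (real (d (Suc n)))^2) then 0 else 1)"
proof -
  have "prime_digit n x = d n \<longleftrightarrow> cf_digit n x = d n" if "n \<ge> 1" for n x
    using assms that unfolding prime_digit_def by (auto simp: not_prime_0)
  then have "{n. n \<ge> 1 \<and> prime_digit n x = d n} = {n. n \<ge> 1 \<and> cf_digit n x = d n}" for x
    by blast
  then have prime_digits:
    "{x \<in> {0<..1}. infinite {n. n \<ge> 1 \<and> prime_digit n x = d n}}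
      = {x \<in> {0<..1}. infinite {n. n \<ge> 1 \<and> cf_digit n x = d n}}"
    by simp
  have d_pos: "d (Suc k) \<ge> 1" for k
    using assms prime_ge_1_nat[of "d (Suc k)"] by auto
  show ?thesis
  proof (cases "summable (\<lambda>n. 1 / (real (d (Suc n)))^2)")
    case True
    then show ?thesis
      using null_sets_cf_digit_eq_infinitely_often[OF d_pos True]
      unfolding prime_digits by (simp add: measure_def null_setsD1)
  next
    case False
    then show ?thesis
      using measure_cf_digit_eq_infinitely_often[OF d_pos False]
      unfolding prime_digits by simp
  qed
qed

end
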